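(* Let $g\in\mathrm{SL}_3(\mathbb{R})$ and suppose there are $\mu>1$ and a positive integer $m$ such that $P_0:=\ker(g^m-\mu\,\mathrm{id})$ is two-dimensional and $L_0:=\ker(g^m-\mu^{-2}\mathrm{id})$ is one-dimensional. Let $X\subset\mathbb{RP}^2$ be a finite $g$-invariant set of lines contained in $P_0$, and let $\mathcal{A}$ be the set of prepared neighborhoods of $X$. Then $A_1\cap\cdots\cap A_n\in\mathcal{A}$ for all $A_1,\dots,A_n\in\mathcal{A}$, and $\bigcap_{A\in\mathcal{A}}A=\bigcup_{x\in X}\mathbb{P}(x\oplus L_0)$.
   Context: For a line $x$ and the line $L_0$, $\mathbb{P}(x\oplus L_0)\subset\mathbb{RP}^2$ denotes the set of lines contained in the subspace $x\oplus L_0$. A set $A\subset\mathbb{RP}^2$ is a prepared neighborhood of $X$ (with respect to $g$) if $X$ is contained in the interior of $A$, $g(A)=A$, and $A=\bigcup_{x\in A}\mathbb{P}(x\oplus L_0)$. *)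

theory Defs
  imports "HOL-Analysis.Analysis"
begin

definition is_line :: "(real^3) set \<Rightarrow> bool" where
  "is_line x \<longleftrightarrow> subspace x \<and> dim x = 1"

definition RP2 :: "(real^3) set set" where
  "RP2 = {x. is_line x}"

text \<open>Quotient topology on RP^2 (from R^3 minus 0): a set U of lines is open iff
  the punctured cone it spans is open in R^3.\<close>
definition rp2_open :: "(real^3) set set \<Rightarrow> bool" where
  "rp2_open U \<longleftrightarrow> U \<subseteq> RP2 \<and> open (\<Union>U - {0})"

definition rp2_interior :: "(real^3) set set \<Rightarrow> (real^3) set set" where
  "rp2_interior A = \<Union>{U. rp2_open U \<and> U \<subseteq> A}"

definition act :: "real^3^3 \<Rightarrow> (real^3) set set \<Rightarrow> (real^3) set set" where
  "act g A = (\<lambda>x. (\<lambda>v. g *v v) ` x) ` A"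

definition projset :: "(real^3) set \<Rightarrow> (real^3) set set" where
  "projset V = {y \<in> RP2. y \<subseteq> V}"

text \<open>x \<oplus> L0 as the subspace spanned by x and L0.\<close>
definition prepared_nbhd ::
  "real^3^3 \<Rightarrow> (real^3) set \<Rightarrow> (real^3) set set \<Rightarrow> (real^3) set set \<Rightarrow> bool" where
  "prepared_nbhd g L0 X A \<longleftrightarrow>
     A \<subseteq> RP2 \<and> X \<subseteq> rp2_interior A \<and> act g A = A \<and>
     A = (\<Union>x\<in>A. projset (span (x \<union> L0)))"

end

theory Submission
  imports Defs "HOL-Combinatorics.Orbits"
begin

text \<open>
  Interiors, \<open>g\<close>-invariance and saturation by the planes \<open>x \<oplus> L0\<close>
  all survive finite intersections, and a prepared neighbourhood contains \<open>X\<close>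
  and is saturated, so it contains every \<open>P(x \<oplus> L0)\<close> with \<open>x \<in> X\<close>.
  Conversely let \<open>y \<noteq> L0\<close> be a line outside this union. Since \<open>g\<^sup>m\<close> acts
  on \<open>P0\<close> and \<open>L0\<close> by the distinct scalars \<open>\<mu>\<close> and \<open>\<mu> powr -2\<close>,
  it fixes every plane through \<open>L0\<close>, so the plane \<open>y \<oplus> L0\<close> has a finite
  \<open>g\<close>-orbit. The lines contained in no plane of this orbit, together with \<open>L0\<close>,
  form an open, \<open>g\<close>-invariant and saturated set missing \<open>y\<close>. It contains
  \<open>X\<close> because for lines \<open>x, y \<noteq> L0\<close> we have \<open>x \<subseteq> y \<oplus> L0\<close>
  iff \<open>y \<subseteq> x \<oplus> L0\<close>.
\<close>

lemma is_line_span_singleton: "a \<noteq> (0::real^3) \<Longrightarrow> is_line (span {a})"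
  by (simp add: is_line_def dim_span)

lemma is_lineE:
  assumes "is_line x"
  obtains a where "a \<noteq> 0" "x = span {a}"
proof -
  have sx: "subspace x" and dx: "dim x = 1" using assms by (auto simp: is_line_def)
  obtain B where B: "B \<subseteq> x" "independent B" "x \<subseteq> span B" "card B = dim x"
    by (rule basis_exists)
  then obtain a where "B = {a}" using dx by (auto simp: card_Suc_eq)
  moreover have "span B \<subseteq> x" using B(1) sx by (simp add: span_minimal)
  ultimately show ?thesis using that B by (metis dependent_zero insertI1 subset_antisym)
qed

lemma is_line_subset_eq: "is_line w \<Longrightarrow> is_line z \<Longrightarrow> w \<subseteq> z \<Longrightarrow> w = z"
  by (simp add: is_line_def subspace_dim_equal)

lemma is_line_eq_span: "is_line x \<Longrightarrow> v \<in> x \<Longrightarrow> v \<noteq> 0 \<Longrightarrow> x = span {v}"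
  by (metis is_line_span_singleton is_line_subset_eq is_line_def span_minimal
      empty_subsetI insert_subset)

lemma is_line_Int_zero_not_subset:
  assumes "is_line L" "P \<inter> L = {0}"
  shows "\<not> L \<subseteq> P"
proof
  assume "L \<subseteq> P"
  obtain a where "a \<noteq> 0" "L = span {a}" using assms(1) by (rule is_lineE)
  then show False using \<open>L \<subseteq> P\<close> assms(2) span_base[of a "{a}"] by blast
qed

lemma is_line_linear_image: "linear f \<Longrightarrow> inj f \<Longrightarrow> is_line x \<Longrightarrow> is_line (f ` x)"
  unfolding is_line_def
  by (metis dim_image_eq inj_on_subset linear_subspace_image subset_UNIV)

lemma span_Un_span: "span (span S \<union> span T) = span (S \<union> T)"
proof
  show "span (span S \<union> span T) \<subseteq> span (S \<union> T)"
    by (metis Un_subset_iff span_minimal span_mono subspace_span sup_ge1 sup_ge2)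
  show "span (S \<union> T) \<subseteq> span (span S \<union> span T)"
    by (meson Un_mono span_mono span_superset)
qed

lemma is_line_subset_span_swap:
  assumes "is_line z" "is_line w" "is_line L" "z \<noteq> L" "w \<noteq> L" "w \<subseteq> span (z \<union> L)"
  shows "z \<subseteq> span (w \<union> L)"
proof -
  obtain a where a: "a \<noteq> 0" "z = span {a}" using assms(1) is_lineE by blast
  obtain b where b: "b \<noteq> 0" "w = span {b}" using assms(2) is_lineE by blast
  obtain c where c: "c \<noteq> 0" "L = span {c}" using assms(3) is_lineE by blast
  have "b \<in> span (insert a {c})"
    using assms(6) a b c span_Un_span[of "{a}" "{c}"] by (auto simp: span_base insert_commute)
  moreover have "b \<notin> span {c}"
  proof
    assume "b \<in> span {c}"
    then have "w \<subseteq> L" using b c by (simp add: span_minimal)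
    then show False using assms is_line_subset_eq by blast
  qed
  ultimately have "a \<in> span (insert b {c})" by (rule in_span_insert)
  then have "a \<in> span (w \<union> L)" using b c span_Un_span[of "{b}" "{c}"] by (simp add: insert_commute)
  then show ?thesis using a by (simp add: span_minimal)
qed

lemma rp2_interior_subset: "rp2_interior A \<subseteq> A"
  by (auto simp: rp2_interior_def)

lemma rp2_open_Int:
  assumes "rp2_open U" "rp2_open V"
  shows "rp2_open (U \<inter> V)"
proof -
  have "(\<Union>U - {0}) \<inter> (\<Union>V - {0}) \<subseteq> \<Union>(U \<inter> V)"
  proof
    fix v assume "v \<in> (\<Union>U - {0}) \<inter> (\<Union>V - {0})"
    then obtain u w where uw: "u \<in> U" "w \<in> V" "v \<in> u" "v \<in> w" "v \<noteq> 0" by blast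
    moreover have "is_line u" "is_line w" using assms uw by (auto simp: rp2_open_def RP2_def)
    ultimately have "u = w" using is_line_eq_span by metis
    then show "v \<in> \<Union>(U \<inter> V)" using uw by blast
  qed
  then have "\<Union>(U \<inter> V) - {0} = (\<Union>U - {0}) \<inter> (\<Union>V - {0})" by blast
  then show ?thesis using assms by (auto simp: rp2_open_def)
qed

lemma rp2_interior_Int: "rp2_interior (A \<inter> B) = rp2_interior A \<inter> rp2_interior B"
proof
  show "rp2_interior (A \<inter> B) \<subseteq> rp2_interior A \<inter> rp2_interior B"
    by (auto simp: rp2_interior_def)
  show "rp2_interior A \<inter> rp2_interior B \<subseteq> rp2_interior (A \<inter> B)"
    unfolding rp2_interior_def using rp2_open_Int by blast
qed

lemma in_projset_span_Un: "x \<in> RP2 \<Longrightarrow> x \<in> projset (span (x \<union> L))"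
  by (simp add: projset_def) (meson span_superset Un_subset_iff)

definition saturated :: "(real^3) set \<Rightarrow> (real^3) set set \<Rightarrow> bool" where
  "saturated L A \<longleftrightarrow> (\<forall>x\<in>A. projset (span (x \<union> L)) \<subseteq> A)"

lemma saturated_iff:
  assumes "A \<subseteq> RP2"
  shows "saturated L A \<longleftrightarrow> A = (\<Union>x\<in>A. projset (span (x \<union> L)))"
  using assms in_projset_span_Un unfolding saturated_def by blast

lemma saturated_Int: "saturated L A \<Longrightarrow> saturated L B \<Longrightarrow> saturated L (A \<inter> B)"
  unfolding saturated_def by blast

lemma prepared_nbhd_saturated: "prepared_nbhd g L0 X A \<Longrightarrow> saturated L0 A"
  unfolding prepared_nbhd_def saturated_def by (metis UN_upper)

lemma act_Int: "inj (\<lambda>v. g *v v) \<Longrightarrow> act g (A \<inter> B) = act g A \<inter> act g B"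
  unfolding act_def by (rule image_Int) (meson inj_image_eq_iff injI)

lemma prepared_nbhd_Int:
  assumes "invertible g" "prepared_nbhd g L0 X A" "prepared_nbhd g L0 X B"
  shows "prepared_nbhd g L0 X (A \<inter> B)"
proof -
  have "act g (A \<inter> B) = A \<inter> B"
    using assms act_Int[OF inj_matrix_vector_mult] by (simp add: prepared_nbhd_def)
  moreover have "A \<inter> B \<subseteq> RP2" "X \<subseteq> rp2_interior (A \<inter> B)"
    using assms rp2_interior_Int by (auto simp: prepared_nbhd_def)
  moreover have "saturated L0 (A \<inter> B)"
    using assms(2,3) prepared_nbhd_saturated saturated_Int by blast
  ultimately show ?thesis using saturated_iff by (simp add: prepared_nbhd_def)
qed

lemma prepared_nbhd_Inter:
  assumes "invertible g" "finite F" "F \<noteq> {}" "\<forall>A\<in>F. prepared_nbhd g L0 X A"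
  shows "prepared_nbhd g L0 X (\<Inter>F)"
  using assms(2-) by (induction F rule: finite_ne_induct) (auto intro: prepared_nbhd_Int[OF assms(1)])

lemma lines_through_subset_prepared_nbhd:
  assumes "prepared_nbhd g L0 X A"
  shows "(\<Union>x\<in>X. projset (span (x \<union> L0))) \<subseteq> A"
proof -
  have "X \<subseteq> A" using assms rp2_interior_subset by (auto simp: prepared_nbhd_def)
  then show ?thesis using prepared_nbhd_saturated[OF assms] unfolding saturated_def by blast
qed

definition lines_avoiding :: "(real^3) set set \<Rightarrow> (real^3) set set" where
  "lines_avoiding HH = {z \<in> RP2. \<forall>H\<in>HH. \<not> z \<subseteq> H}"

lemma rp2_open_lines_avoiding:
  assumes "finite HH" "\<And>H. H \<in> HH \<Longrightarrow> subspace H"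
  shows "rp2_open (lines_avoiding HH)"
proof -
  have "\<Union>(lines_avoiding HH) - {0} = - ({0} \<union> \<Union>HH)"
  proof
    show "\<Union>(lines_avoiding HH) - {0} \<subseteq> - ({0} \<union> \<Union>HH)"
    proof
      fix v assume "v \<in> \<Union>(lines_avoiding HH) - {0}"
      then obtain z where z: "z \<in> lines_avoiding HH" "v \<in> z" "v \<noteq> 0" by auto
      then have "z = span {v}" using is_line_eq_span by (auto simp: lines_avoiding_def RP2_def)
      then have "v \<notin> H" if "H \<in> HH" for H
        using z that assms(2) span_minimal[of "{v}" H] by (auto simp: lines_avoiding_def)
      then show "v \<in> - ({0} \<union> \<Union>HH)" using z by blast
    qed
    show "- ({0} \<union> \<Union>HH) \<subseteq> \<Union>(lines_avoiding HH) - {0}"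
    proof
      fix v assume v: "v \<in> - ({0} \<union> \<Union>HH)"
      then have "span {v} \<in> lines_avoiding HH"
        using is_line_span_singleton[of v] span_base[of v "{v}"]
        by (auto simp: lines_avoiding_def RP2_def)
      then show "v \<in> \<Union>(lines_avoiding HH) - {0}" using v span_base[of v "{v}"] by blast
    qed
  qed
  moreover have "closed ({0} \<union> \<Union>HH)"
    using assms by (intro closed_Union closed_Un) (auto intro: closed_subspace)
  ultimately show ?thesis by (auto simp: rp2_open_def lines_avoiding_def open_Compl)
qed

lemma act_lines_avoiding:
  assumes "invertible g"
  shows "act g (lines_avoiding HH) = lines_avoiding ((\<lambda>H. (\<lambda>v. g *v v) ` H) ` HH)"
proof -
  define f where "f = (\<lambda>v. g *v v)"
  obtain g' where g': "g ** g' = mat 1" "g' ** g = mat 1"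
    using assms by (auto simp: invertible_def)
  define f' where "f' = (\<lambda>v. g' *v v)"
  have ff': "f (f' v) = v" "f' (f v) = v" for v
    using g' by (simp_all add: f_def f'_def matrix_vector_mul_assoc)
  have "linear f" "linear f'" by (simp_all add: f_def f'_def)
  moreover have "inj f" "inj f'" using ff' by (metis injI)+
  moreover have "f' ` (f ` z) = z" for z by (simp add: image_image ff')
  ultimately have line: "f ` z \<in> RP2 \<longleftrightarrow> z \<in> RP2" for z
    unfolding RP2_def mem_Collect_eq by (metis is_line_linear_image)
  have sub: "f ` z \<subseteq> f ` H \<longleftrightarrow> z \<subseteq> H" for z H
    using \<open>inj f\<close> by (simp add: inj_image_subset_iff)
  have "(\<lambda>z. f ` z) ` lines_avoiding HH \<subseteq> lines_avoiding ((\<lambda>H. f ` H) ` HH)"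
    using line sub by (auto simp: lines_avoiding_def)
  moreover have "w \<in> (\<lambda>z. f ` z) ` lines_avoiding HH"
    if "w \<in> lines_avoiding ((\<lambda>H. f ` H) ` HH)" for w
  proof
    show w: "w = f ` (f' ` w)" by (simp add: image_image ff')
    have "w \<in> RP2" "\<forall>H\<in>HH. \<not> w \<subseteq> f ` H" using that by (auto simp: lines_avoiding_def)
    then show "f' ` w \<in> lines_avoiding HH"
      using line[of "f' ` w"] sub[of "f' ` w"] by (simp add: lines_avoiding_def image_image ff')
  qed
  ultimately show ?thesis unfolding act_def f_def[symmetric] by blast
qed

lemma saturated_insert_lines_avoiding:
  assumes "is_line L0" "\<And>H. H \<in> HH \<Longrightarrow> subspace H \<and> L0 \<subseteq> H"
  shows "saturated L0 (insert L0 (lines_avoiding HH))"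
  unfolding saturated_def
proof (intro ballI subsetI)
  fix x w assume x: "x \<in> insert L0 (lines_avoiding HH)" and "w \<in> projset (span (x \<union> L0))"
  then have "is_line w" "w \<subseteq> span (x \<union> L0)" by (auto simp: projset_def RP2_def)
  show "w \<in> insert L0 (lines_avoiding HH)"
  proof (cases "x = L0")
    case True
    then have "w \<subseteq> L0"
      using \<open>w \<subseteq> span (x \<union> L0)\<close> assms(1) by (metis Un_absorb is_line_def span_eq_iff)
    then show ?thesis using \<open>is_line w\<close> assms(1) is_line_subset_eq by blast
  next
    case False
    then have x: "x \<in> lines_avoiding HH" using x by simp
    show ?thesis
    proof (cases "w = L0")
      case False
      then have "x \<subseteq> span (w \<union> L0)"
        using is_line_subset_span_swap[of x w L0] x \<open>x \<noteq> L0\<close> \<open>is_line w\<close> assms(1)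
          \<open>w \<subseteq> span (x \<union> L0)\<close> by (auto simp: lines_avoiding_def RP2_def)
      moreover have "span (w \<union> L0) \<subseteq> H" if "H \<in> HH" "w \<subseteq> H" for H
        using that assms(2) by (simp add: span_minimal)
      ultimately have "\<not> w \<subseteq> H" if "H \<in> HH" for H
        using x that unfolding lines_avoiding_def by blast
      then show ?thesis using \<open>is_line w\<close> by (simp add: lines_avoiding_def RP2_def)
    qed simp
  qed
qed

lemma prepared_nbhd_insert_lines_avoiding:
  assumes "invertible g" "is_line L0" "(\<lambda>v. g *v v) ` L0 = L0"
    and "finite HH" "\<And>H. H \<in> HH \<Longrightarrow> subspace H \<and> L0 \<subseteq> H"
    and "(\<lambda>H. (\<lambda>v. g *v v) ` H) ` HH = HH"
    and "X \<subseteq> lines_avoiding HH"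
  shows "prepared_nbhd g L0 X (insert L0 (lines_avoiding HH))"
proof -
  let ?A = "insert L0 (lines_avoiding HH)"
  have "?A \<subseteq> RP2" using assms(2) by (auto simp: RP2_def lines_avoiding_def)
  have "rp2_open (lines_avoiding HH)" using rp2_open_lines_avoiding assms(4,5) by blast
  then have "X \<subseteq> rp2_interior ?A" using assms(7) unfolding rp2_interior_def by blast
  have "act g ?A = insert ((\<lambda>v. g *v v) ` L0) (act g (lines_avoiding HH))"
    by (simp add: act_def)
  then have "act g ?A = ?A" using act_lines_avoiding[OF assms(1)] assms(3,6) by simp
  moreover have "?A = (\<Union>x\<in>?A. projset (span (x \<union> L0)))"
    using saturated_insert_lines_avoiding[OF assms(2,5)] saturated_iff[OF \<open>?A \<subseteq> RP2\<close>] by blast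
  ultimately show ?thesis
    using \<open>?A \<subseteq> RP2\<close> \<open>X \<subseteq> rp2_interior ?A\<close> unfolding prepared_nbhd_def
    by (intro conjI) assumption+
qed

lemma funpow_image:
  fixes f :: "'a \<Rightarrow> 'a"
  shows "((\<lambda>S. f ` S) ^^ k) S = (f ^^ k) ` S"
  by (induction k) (simp_all add: image_comp)

lemma orbit_periodic_point:
  assumes "inj \<phi>" "m > 0" "(\<phi> ^^ m) s = s"
  shows "s \<in> orbit \<phi> s" "finite (orbit \<phi> s)" "\<phi> ` orbit \<phi> s = orbit \<phi> s"
proof -
  show "s \<in> orbit \<phi> s" using assms(2,3) unfolding orbit_altdef by force
  then show "finite (orbit \<phi> s)" by (rule finite_orbit)
  then show "\<phi> ` orbit \<phi> s = orbit \<phi> s"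
    by (rule endo_inj_surj) (auto intro: orbit.step inj_on_subset[OF assms(1)])
qed

lemma prepared_nbhd_RP2:
  assumes "invertible g" "is_line L0" "(\<lambda>v. g *v v) ` L0 = L0" "X \<subseteq> RP2"
  shows "prepared_nbhd g L0 X RP2"
  using prepared_nbhd_insert_lines_avoiding[of g L0 "{}" X] assms
  by (simp add: lines_avoiding_def insert_absorb RP2_def)

lemma prepared_nbhd_avoiding_subspace:
  fixes g :: "real^3^3"
  defines "f \<equiv> \<lambda>v. g *v v"
  assumes g: "invertible g" and L0: "is_line L0" "f ` L0 = L0"
    and periodic: "m > 0" "(f ^^ m) ` H0 = H0"
    and H0: "subspace H0" "L0 \<subseteq> H0"
    and X: "X \<subseteq> RP2" "act g X = X" "\<forall>x\<in>X. \<not> x \<subseteq> H0"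
  obtains A where "prepared_nbhd g L0 X A" "\<And>z. z \<in> A \<Longrightarrow> z \<subseteq> H0 \<Longrightarrow> z = L0"
proof -
  define HH where "HH = orbit (\<lambda>H. f ` H) H0"
  define admissible
    where "admissible H \<longleftrightarrow> subspace H \<and> L0 \<subseteq> H \<and> (\<forall>x\<in>X. \<not> x \<subseteq> H)" for H
  have inj: "inj f" using g by (simp add: f_def inj_matrix_vector_mult)
  then have "inj (\<lambda>H. f ` H)" by (meson inj_image_eq_iff injI)
  moreover have "((\<lambda>H. f ` H) ^^ m) H0 = H0" using periodic(2) by (simp add: funpow_image)
  ultimately have orbit: "H0 \<in> HH" "finite HH" "(\<lambda>H. f ` H) ` HH = HH"
    unfolding HH_def by (fact orbit_periodic_point[OF _ periodic(1)])+
  have admissible_image: "admissible (f ` H)" if "admissible H" for H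
  proof -
    have "subspace (f ` H)" using that by (simp add: admissible_def f_def linear_subspace_image)
    moreover have "L0 \<subseteq> f ` H" using that L0(2) by (metis admissible_def image_mono)
    moreover have "\<not> x \<subseteq> f ` H" if "x \<in> X" for x
    proof
      assume "x \<subseteq> f ` H"
      have "x \<in> (\<lambda>x'. f ` x') ` X" using \<open>x \<in> X\<close> X(2) by (simp add: act_def f_def)
      then obtain x' where "x' \<in> X" "x = f ` x'" by blast
      then have "x' \<subseteq> H" using \<open>x \<subseteq> f ` H\<close> inj by (simp add: inj_image_subset_iff)
      then show False using \<open>x' \<in> X\<close> \<open>admissible H\<close> by (simp add: admissible_def)
    qed
    ultimately show ?thesis by (simp add: admissible_def)
  qed
  have HH_admissible: "admissible H" if "H \<in> HH" for H
    using that unfolding HH_def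
    by (induction rule: orbit.induct) (use H0 X(3) admissible_image admissible_def in auto)
  then have "X \<subseteq> lines_avoiding HH"
    using X(1) by (auto simp: lines_avoiding_def admissible_def)
  then have "prepared_nbhd g L0 X (insert L0 (lines_avoiding HH))"
    using prepared_nbhd_insert_lines_avoiding[OF g L0[unfolded f_def] orbit(2) _
        orbit(3)[unfolded f_def]] HH_admissible admissible_def by blast
  moreover have "z = L0" if "z \<in> insert L0 (lines_avoiding HH)" "z \<subseteq> H0" for z
    using that orbit(1) by (auto simp: lines_avoiding_def)
  ultimately show ?thesis using that by blast
qed

lemma Inter_prepared_nbhds_subset:
  fixes g :: "real^3^3"
  defines "f \<equiv> \<lambda>v. g *v v"
  assumes g: "invertible g" and L0: "is_line L0" "f ` L0 = L0"
    and planes: "m > 0" "\<And>H. subspace H \<Longrightarrow> L0 \<subseteq> H \<Longrightarrow> (f ^^ m) ` H = H"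
    and X: "X \<subseteq> RP2" "act g X = X" "L0 \<notin> X"
  shows "\<Inter>{A. prepared_nbhd g L0 X A} \<subseteq> (\<Union>x\<in>X. projset (span (x \<union> L0)))"
    (is "_ \<subseteq> ?B")
proof (cases "X = {}")
  case True
  then have "prepared_nbhd g L0 X {}" by (simp add: prepared_nbhd_def act_def)
  then show ?thesis by blast
next
  case False
  then have "L0 \<in> ?B" using in_projset_span_Un[of L0] L0(1) by (auto simp: RP2_def Un_commute)
  show ?thesis
  proof
    fix y assume y: "y \<in> \<Inter>{A. prepared_nbhd g L0 X A}"
    then have "y \<in> RP2" using prepared_nbhd_RP2[OF g L0[unfolded f_def] X(1)] by blast
    show "y \<in> ?B"
    proof (rule ccontr)
      assume "y \<notin> ?B"
      then have "y \<noteq> L0" using \<open>L0 \<in> ?B\<close> by blast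
      have "\<not> x \<subseteq> span (y \<union> L0)" if "x \<in> X" for x
      proof
        assume "x \<subseteq> span (y \<union> L0)"
        then have "y \<subseteq> span (x \<union> L0)"
          using is_line_subset_span_swap[of y x L0] that X \<open>y \<in> RP2\<close> \<open>y \<noteq> L0\<close> L0(1)
          by (auto simp: RP2_def)
        then show False using \<open>y \<notin> ?B\<close> \<open>y \<in> RP2\<close> that by (auto simp: projset_def)
      qed
      moreover have "L0 \<subseteq> span (y \<union> L0)" "y \<subseteq> span (y \<union> L0)"
        by (meson span_superset Un_subset_iff)+
      ultimately obtain A
        where "prepared_nbhd g L0 X A" "\<And>z. z \<in> A \<Longrightarrow> z \<subseteq> span (y \<union> L0) \<Longrightarrow> z = L0"
        using prepared_nbhd_avoiding_subspace[OF g L0[unfolded f_def] planes(1)] planes(2) X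
        by (metis f_def subspace_span)
      then show False using y \<open>y \<noteq> L0\<close> \<open>y \<subseteq> span (y \<union> L0)\<close> by blast
    qed
  qed
qed

lemma linear_funpow:
  fixes f :: "'a::real_vector \<Rightarrow> 'a"
  shows "linear f \<Longrightarrow> linear (f ^^ k)"
  by (induction k) (auto simp: linear_id intro: linear_compose)

lemma linear_inj_image_subspace_eq:
  fixes f :: "'a::euclidean_space \<Rightarrow> 'a"
  assumes "linear f" "inj f" "subspace S" "f ` S \<subseteq> S"
  shows "f ` S = S"
proof -
  have "dim (f ` S) = dim S" using assms(1,2) by (simp add: dim_image_eq inj_on_subset)
  moreover have "subspace (f ` S)" using assms(1,3) by (rule linear_subspace_image)
  ultimately show ?thesis using assms(3,4) subspace_dim_equal by (metis order_refl)
qed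

lemma subspace_eigenspace: "linear f \<Longrightarrow> subspace {v. f v - c *\<^sub>R v = 0}"
  unfolding subspace_def by (simp add: linear_0 linear_add linear_scale algebra_simps)

lemma eigenspaces_Int:
  assumes "linear f" "a \<noteq> b"
  shows "{v. f v - a *\<^sub>R v = 0} \<inter> {v. f v - b *\<^sub>R v = 0} = {0}"
proof
  show "{v. f v - a *\<^sub>R v = 0} \<inter> {v. f v - b *\<^sub>R v = 0} \<subseteq> {0}"
  proof
    fix v assume "v \<in> {v. f v - a *\<^sub>R v = 0} \<inter> {v. f v - b *\<^sub>R v = 0}"
    then have "f v = a *\<^sub>R v" "f v = b *\<^sub>R v" by auto
    then have "a *\<^sub>R v = b *\<^sub>R v" by metis
    then show "v \<in> {0}" using assms(2) by (simp add: scaleR_cancel_right)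
  qed
  show "{0} \<subseteq> {v. f v - a *\<^sub>R v = 0} \<inter> {v. f v - b *\<^sub>R v = 0}"
    using linear_0[OF assms(1)] by simp
qed

lemma eigenspace_funpow_image:
  fixes f :: "'a::euclidean_space \<Rightarrow> 'a"
  assumes "linear f" "inj f"
  shows "f ` {v. (f ^^ m) v - c *\<^sub>R v = 0} = {v. (f ^^ m) v - c *\<^sub>R v = 0}"
proof (rule linear_inj_image_subspace_eq[OF assms
      subspace_eigenspace[OF linear_funpow[OF assms(1)]]])
  show "f ` {v. (f ^^ m) v - c *\<^sub>R v = 0} \<subseteq> {v. (f ^^ m) v - c *\<^sub>R v = 0}"
  proof
    fix w assume "w \<in> f ` {v. (f ^^ m) v - c *\<^sub>R v = 0}"
    then obtain v where v: "(f ^^ m) v = c *\<^sub>R v" "w = f v" by auto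
    have "(f ^^ m) w = f ((f ^^ m) v)" using v(2) by (simp add: funpow_swap1)
    also have "\<dots> = c *\<^sub>R w" using v assms by (simp add: linear_scale)
    finally show "w \<in> {v. (f ^^ m) v - c *\<^sub>R v = 0}" by simp
  qed
qed

lemma subspace_sums_eq_UNIV:
  fixes P L :: "'a::euclidean_space set"
  assumes "subspace P" "subspace L" "P \<inter> L = {0}" "dim P + dim L = DIM('a)"
  shows "\<exists>p\<in>P. \<exists>l\<in>L. v = p + l"
proof -
  define S where "S = {p + l |p l. p \<in> P \<and> l \<in> L}"
  have "dim S = DIM('a)"
    using dim_sums_Int[OF assms(1,2)] assms(3,4) by (simp add: S_def)
  moreover have "subspace S" unfolding S_def by (rule subspace_sums[OF assms(1,2)])
  ultimately have "S = UNIV" by (metis dim_eq_full span_eq_iff)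
  then show ?thesis unfolding S_def by blast
qed

lemma eigen_decomposition_image_subspace_subset:
  assumes "linear F" "\<And>p. p \<in> P \<Longrightarrow> F p = a *\<^sub>R p" "\<And>l. l \<in> L \<Longrightarrow> F l = b *\<^sub>R l"
    and "\<And>v. \<exists>p\<in>P. \<exists>l\<in>L. v = p + l" and "subspace H" "L \<subseteq> H"
  shows "F ` H \<subseteq> H"
proof
  fix w assume "w \<in> F ` H"
  then obtain v where v: "v \<in> H" "w = F v" by auto
  obtain p l where pl: "p \<in> P" "l \<in> L" "v = p + l" using assms(4) by blast
  have "F v = a *\<^sub>R v + (b - a) *\<^sub>R l"
    using pl assms(2,3) linear_add[OF assms(1)] by (simp add: algebra_simps)
  then show "w \<in> H"
    using v pl assms(5,6) by (auto simp: subspace_add subspace_scale)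
qed

lemma image_subspace_supset_eigenspace:
  fixes F :: "'a::euclidean_space \<Rightarrow> 'a" and a b :: real
  defines "P \<equiv> {v. F v - a *\<^sub>R v = 0}" and "L \<equiv> {v. F v - b *\<^sub>R v = 0}"
  assumes "linear F" "inj F" "a \<noteq> b" "dim P + dim L = DIM('a)" "subspace H" "L \<subseteq> H"
  shows "F ` H = H"
proof (rule linear_inj_image_subspace_eq[OF assms(3,4,7)])
  have "subspace P" "subspace L" unfolding P_def L_def by (rule subspace_eigenspace[OF assms(3)])+
  moreover have "P \<inter> L = {0}" unfolding P_def L_def by (rule eigenspaces_Int[OF assms(3,5)])
  ultimately have decomposition: "\<exists>p\<in>P. \<exists>l\<in>L. v = p + l" for v
    by (rule subspace_sums_eq_UNIV[OF _ _ _ assms(6)])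
  show "F ` H \<subseteq> H"
    by (rule eigen_decomposition_image_subspace_subset[OF assms(3) _ _ decomposition assms(7,8),
          where a = a and b = b])
      (simp_all add: P_def L_def)
qed

theorem mainTheorem11:
  fixes g :: "real^3^3" and \<mu> :: real and m :: nat
    and P0 L0 :: "(real^3) set" and X :: "(real^3) set set"
  assumes "det g = 1"
    and "\<mu> > 1" and "m > 0"
    and "P0 = {v. ((\<lambda>w. g *v w) ^^ m) v - \<mu> *\<^sub>R v = 0}"
    and "dim P0 = 2"
    and "L0 = {v. ((\<lambda>w. g *v w) ^^ m) v - (\<mu> powr -2) *\<^sub>R v = 0}"
    and "dim L0 = 1"
    and "finite X" and "X \<subseteq> RP2" and "act g X = X"
    and "\<forall>x\<in>X. x \<subseteq> P0"
  shows "(\<forall>F. finite F \<and> F \<noteq> {} \<and> F \<subseteq> {A. prepared_nbhd g L0 X A}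
             \<longrightarrow> prepared_nbhd g L0 X (\<Inter>F))
       \<and> \<Inter>{A. prepared_nbhd g L0 X A} = (\<Union>x\<in>X. projset (span (x \<union> L0)))"
proof -
  define f where "f = (\<lambda>w. g *v w)"
  have g: "invertible g" using assms(1) by (simp add: invertible_det_nz)
  then have "linear f" "inj f" "linear (f ^^ m)" "inj (f ^^ m)"
    by (simp_all add: f_def inj_matrix_vector_mult inj_fn linear_funpow)
  have "\<mu> \<noteq> \<mu> powr -2" using assms(2) powr_less_one[of \<mu> "-2"] by simp
  have "is_line L0"
    using assms(6,7) subspace_eigenspace[OF \<open>linear (f ^^ m)\<close>] by (simp add: is_line_def f_def)
  moreover have "f ` L0 = L0"
    using eigenspace_funpow_image[OF \<open>linear f\<close> \<open>inj f\<close>] assms(6) by (simp add: f_def)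
  moreover have "(f ^^ m) ` H = H" if "subspace H" "L0 \<subseteq> H" for H
    using image_subspace_supset_eigenspace[OF \<open>linear (f ^^ m)\<close> \<open>inj (f ^^ m)\<close>
        \<open>\<mu> \<noteq> \<mu> powr -2\<close>] assms(4-7) that by (simp add: f_def)
  moreover have "L0 \<notin> X"
  proof -
    have "P0 \<inter> L0 = {0}"
      using eigenspaces_Int[OF \<open>linear (f ^^ m)\<close> \<open>\<mu> \<noteq> \<mu> powr -2\<close>] assms(4,6)
      by (simp add: f_def)
    then show ?thesis using is_line_Int_zero_not_subset[OF \<open>is_line L0\<close>] assms(11) by blast
  qed
  ultimately have "\<Inter>{A. prepared_nbhd g L0 X A} \<subseteq> (\<Union>x\<in>X. projset (span (x \<union> L0)))"
    using Inter_prepared_nbhds_subset[OF g, of L0 m X] g assms(3,9,10) by (simp add: f_def)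
  then show ?thesis
    using lines_through_subset_prepared_nbhd prepared_nbhd_Inter[OF g] by blast
qed

end
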